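(* Let $R$ be a supertropical semiring, $V$ a free $R$-module with base $(\varepsilon_i\mid i\in I)$, $q:V\to R$ a quadratic form, and $x\in V\setminus\{0\}$ a $q$-minimal vector. Then $|\operatorname{supp}(x)|\le 2$ if $q(x)\in\mathcal T$, and $|\operatorname{supp}(x)|\le4$ if $q(x)\in\mathcal G$.
   Context: All semirings are commutative with $1$. A semiring $R$ is supertropical if $e:=1+1$ satisfies $e+e=e$ and, for all $x,y\in R$: if $ex\neq ey$ then $x+y\in\{x,y\}$, and if $ex=ey$ then $x+y=ey$. $\mathcal T=R\setminus eR$, $\mathcal G=eR\setminus\{0\}$. A quadratic form on an $R$-module $V$ is a map $q:V\to R$ with $q(ax)=a^2q(x)$ such that some symmetric bilinear $b$ (a companion) satisfies $q(x+y)=q(x)+q(y)+b(x,y)$. Every $R$-module $V$ (and $R$ itself) carries the minimal ordering $x\le y\iff\exists z:\ x+z=y$, a partial order; $x<y$ means $x\le y$, $x\ne y$. A vector $x\in V$ is $q$-minimal if there is no $x'<x$ with $q(x')=q(x)$. For $x=\sum_i x_i\varepsilon_i$, $\operatorname{supp}(x)=\{i\in I: x_i\neq0\}$. *)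

theory Defs
  imports Main
begin

definition ghost_unit :: "'a::comm_semiring_1" where
  "ghost_unit = 1 + 1"

definition supertropical :: "'a::comm_semiring_1 itself \<Rightarrow> bool" where
  "supertropical _ \<longleftrightarrow>
     (ghost_unit + ghost_unit = (ghost_unit :: 'a)) \<and>
     (\<forall>x y :: 'a. (ghost_unit * x \<noteq> ghost_unit * y \<longrightarrow> x + y \<in> {x, y}) \<and>
                  (ghost_unit * x = ghost_unit * y \<longrightarrow> x + y = ghost_unit * y))"

definition tangibles :: "'a::comm_semiring_1 set" where
  "tangibles = UNIV - range (\<lambda>r. ghost_unit * r)"

definition ghosts :: "'a::comm_semiring_1 set" where
  "ghosts = range (\<lambda>r. ghost_unit * r) - {0}"

(* The free R-module with base (eps_i | i in I), I = UNIV :: 'i set: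
   vectors x = sum_i x_i eps_i are the finitely supported coefficient functions. *)
definition free_mod :: "('i \<Rightarrow> 'a::comm_semiring_1) set" where
  "free_mod = {x. finite {i. x i \<noteq> 0}}"

definition vadd :: "('i \<Rightarrow> 'a::comm_semiring_1) \<Rightarrow> ('i \<Rightarrow> 'a) \<Rightarrow> ('i \<Rightarrow> 'a)" where
  "vadd x y = (\<lambda>i. x i + y i)"

definition vsmult :: "'a::comm_semiring_1 \<Rightarrow> ('i \<Rightarrow> 'a) \<Rightarrow> ('i \<Rightarrow> 'a)" where
  "vsmult a x = (\<lambda>i. a * x i)"

definition vzero :: "'i \<Rightarrow> 'a::comm_semiring_1" where
  "vzero = (\<lambda>i. 0)"

definition supp :: "('i \<Rightarrow> 'a::comm_semiring_1) \<Rightarrow> 'i set" where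
  "supp x = {i. x i \<noteq> 0}"

definition sym_bilinear :: "(('i \<Rightarrow> 'a::comm_semiring_1) \<Rightarrow> ('i \<Rightarrow> 'a) \<Rightarrow> 'a) \<Rightarrow> bool" where
  "sym_bilinear b \<longleftrightarrow>
     (\<forall>x\<in>free_mod. \<forall>y\<in>free_mod. b x y = b y x) \<and>
     (\<forall>x\<in>free_mod. \<forall>x'\<in>free_mod. \<forall>y\<in>free_mod. b (vadd x x') y = b x y + b x' y) \<and>
     (\<forall>a. \<forall>x\<in>free_mod. \<forall>y\<in>free_mod. b (vsmult a x) y = a * b x y)"

definition quadratic_form :: "(('i \<Rightarrow> 'a::comm_semiring_1) \<Rightarrow> 'a) \<Rightarrow> bool" where
  "quadratic_form q \<longleftrightarrow>
     (\<forall>a. \<forall>x\<in>free_mod. q (vsmult a x) = a ^ 2 * q x) \<and>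
     (\<exists>b. sym_bilinear b \<and>
          (\<forall>x\<in>free_mod. \<forall>y\<in>free_mod. q (vadd x y) = q x + q y + b x y))"

definition min_le :: "('i \<Rightarrow> 'a::comm_semiring_1) \<Rightarrow> ('i \<Rightarrow> 'a) \<Rightarrow> bool" where
  "min_le x y \<longleftrightarrow> (\<exists>z\<in>free_mod. vadd x z = y)"

definition q_minimal :: "(('i \<Rightarrow> 'a::comm_semiring_1) \<Rightarrow> 'a) \<Rightarrow> ('i \<Rightarrow> 'a) \<Rightarrow> bool" where
  "q_minimal q x \<longleftrightarrow>
     \<not> (\<exists>x'\<in>free_mod. min_le x' x \<and> x' \<noteq> x \<and> q x' = q x)"

end

theory Submission
  imports Defs
begin

text \<open>Expanding in the base, \<open>q(x)\<close> is a finite sum of terms \<open>x\<^sub>i\<^sup>2 q(\<epsilon>\<^sub>i)\<close> and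
  \<open>x\<^sub>i x\<^sub>j b(\<epsilon>\<^sub>i,\<epsilon>\<^sub>j)\<close>, one for each set \<open>{i, j} \<subseteq> supp(x)\<close>. In a supertropical
  semiring a finite sum equals its \<nu>-largest term when that term is unique, and is \<open>e\<close> times it
  otherwise; so \<open>q(x)\<close> is already the sum over any subfamily containing one dominant term, or two
  \<nu>-equivalent dominant terms, and the second case makes \<open>q(x)\<close> a ghost. Restricting \<open>x\<close> to the
  at most two, resp. four, indices of these terms gives a vector \<open>\<le> x\<close> with the same
  \<open>q\<close>-value, so \<open>q\<close>-minimality forces \<open>supp(x)\<close> into that index set.\<close>

lemma supertropical_add_ghost_ghost:
  assumes "supertropical TYPE('a::comm_semiring_1)"
  shows "ghost_unit + ghost_unit = (ghost_unit::'a)"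
  using assms unfolding supertropical_def by blast

lemma supertropical_add_distinct:
  assumes "supertropical TYPE('a::comm_semiring_1)" "ghost_unit * a \<noteq> ghost_unit * (b::'a)"
  shows "a + b \<in> {a, b}"
  using assms unfolding supertropical_def by blast

lemma supertropical_add_tie:
  assumes "supertropical TYPE('a::comm_semiring_1)" "ghost_unit * a = ghost_unit * (b::'a)"
  shows "a + b = ghost_unit * b"
  using assms unfolding supertropical_def by blast

lemma ghost_unit_times_ghost:
  assumes "supertropical TYPE('a::comm_semiring_1)"
  shows "ghost_unit * (ghost_unit * a) = ghost_unit * (a::'a)"
proof -
  have "ghost_unit * (ghost_unit * a) = (ghost_unit + ghost_unit) * a"
    by (simp add: ghost_unit_def algebra_simps)
  then show ?thesis
    using supertropical_add_ghost_ghost[OF assms] by simp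
qed

text \<open>The \<nu>-order \<open>a \<le>\<^sub>\<nu> b\<close> of the paper: \<open>ea \<le> eb\<close> in the minimal ordering of \<open>R\<close>.\<close>

definition ghost_le :: "'a::comm_semiring_1 \<Rightarrow> 'a \<Rightarrow> bool" where
  "ghost_le a b \<longleftrightarrow> ghost_unit * a + ghost_unit * b = ghost_unit * b"

lemma ghost_le_total:
  assumes ST: "supertropical TYPE('a::comm_semiring_1)"
  shows "ghost_le a b \<or> ghost_le b (a::'a)"
proof (cases "ghost_unit * a = ghost_unit * b")
  case True
  then show ?thesis
    using supertropical_add_ghost_ghost[OF ST]
    unfolding ghost_le_def by (simp add: distrib_right[symmetric])
next
  case False
  then have "ghost_unit * (ghost_unit * a) \<noteq> ghost_unit * (ghost_unit * b)"
    by (simp add: ghost_unit_times_ghost[OF ST])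
  from supertropical_add_distinct[OF ST this] show ?thesis
    unfolding ghost_le_def by (auto simp: add.commute)
qed

lemma ghost_le_refl:
  assumes "supertropical TYPE('a::comm_semiring_1)"
  shows "ghost_le a (a::'a)"
  using ghost_le_total[OF assms] by blast

lemma ghost_le_trans:
  assumes "ghost_le a b" "ghost_le b (c::'a::comm_semiring_1)"
  shows "ghost_le a c"
  using assms unfolding ghost_le_def by (metis add.assoc)

lemma supertropical_add_ghost_less:
  assumes ST: "supertropical TYPE('a::comm_semiring_1)"
    and "ghost_le a b" "ghost_unit * a \<noteq> ghost_unit * (b::'a)"
  shows "a + b = b"
proof -
  have "a + b \<noteq> a"
  proof
    assume "a + b = a"
    then have "ghost_unit * a + ghost_unit * b = ghost_unit * a"
      by (metis distrib_left)
    then show False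
      using assms(2,3) unfolding ghost_le_def by simp
  qed
  then show ?thesis
    using supertropical_add_distinct[OF ST assms(3)] by blast
qed

lemma supertropical_add_absorb_ghost:
  assumes ST: "supertropical TYPE('a::comm_semiring_1)" and "ghost_le a (b::'a)"
  shows "a + ghost_unit * b = ghost_unit * b"
proof (cases "ghost_unit * a = ghost_unit * b")
  case True
  then show ?thesis
    using supertropical_add_tie[OF ST, of a "ghost_unit * b"] ghost_unit_times_ghost[OF ST] by simp
next
  case False
  have "ghost_le a (ghost_unit * b)"
    using assms(2) ghost_unit_times_ghost[OF ST] unfolding ghost_le_def by simp
  then show ?thesis
    using supertropical_add_ghost_less[OF ST] False ghost_unit_times_ghost[OF ST] by simp
qed

lemma ghost_le_exists_max:
  assumes ST: "supertropical TYPE('a::comm_semiring_1)"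
  shows "finite A \<Longrightarrow> A \<noteq> {} \<Longrightarrow> \<exists>k\<in>A. \<forall>j\<in>A. ghost_le (F j) (F k :: 'a)"
proof (induction A rule: finite_ne_induct)
  case (singleton x)
  then show ?case using ghost_le_refl[OF ST] by auto
next
  case (insert x A)
  then obtain k where "k \<in> A" "\<forall>j\<in>A. ghost_le (F j) (F k)" by blast
  then show ?case
    using ghost_le_total[OF ST, of "F x" "F k"] ghost_le_trans ghost_le_refl[OF ST] by blast
qed

lemma sum_absorbed_by_ghost_greater:
  assumes ST: "supertropical TYPE('a::comm_semiring_1)"
    and "finite B" "\<forall>j\<in>B. ghost_le (F j) c \<and> ghost_unit * F j \<noteq> ghost_unit * c"
  shows "c + sum F B = (c::'a)"
  using assms(2,3)
proof (induction B rule: finite_induct)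
  case (insert x B)
  then show ?case
    using supertropical_add_ghost_less[OF ST, of "F x" c] by (simp add: add.assoc[symmetric] add.commute[of c])
qed simp

lemma sum_absorbed_by_ghost:
  assumes ST: "supertropical TYPE('a::comm_semiring_1)"
    and "finite B" "\<forall>j\<in>B. ghost_le (F j) c"
  shows "ghost_unit * c + sum F B = ghost_unit * (c::'a)"
  using assms(2,3)
proof (induction B rule: finite_induct)
  case (insert x B)
  then show ?case
    using supertropical_add_absorb_ghost[OF ST, of "F x" c] by (simp add: add.assoc[symmetric] add.commute[of "ghost_unit * c"])
qed simp

lemma sum_eq_strict_max:
  assumes ST: "supertropical TYPE('a::comm_semiring_1)"
    and "finite A" "k \<in> A"
    and "\<forall>j\<in>A - {k}. ghost_le (F j) (F k) \<and> ghost_unit * F j \<noteq> ghost_unit * (F k :: 'a)"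
  shows "sum F A = F k"
  using assms sum_absorbed_by_ghost_greater[OF ST, of "A - {k}" F "F k"] by (simp add: sum.remove)

lemma sum_eq_ghost_of_tied_max:
  assumes ST: "supertropical TYPE('a::comm_semiring_1)"
    and "finite A" "k \<in> A" "l \<in> A" "k \<noteq> l"
    and "ghost_unit * F l = ghost_unit * (F k :: 'a)" "\<forall>j\<in>A. ghost_le (F j) (F k)"
  shows "sum F A = ghost_unit * F k"
proof -
  have "sum F A = (F l + F k) + sum F (A - {k} - {l})"
    using assms(2-5) sum.remove[of A k F] sum.remove[of "A - {k}" l F] by (simp add: ac_simps)
  also have "F l + F k = ghost_unit * F k"
    using supertropical_add_tie[OF ST assms(6)] .
  finally show ?thesis
    using sum_absorbed_by_ghost[OF ST, of "A - {k} - {l}" F "F k"] assms(2,7) by simp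
qed

lemma supertropical_sum_dominant_terms:
  assumes ST: "supertropical TYPE('a::comm_semiring_1)" and "finite A" "A \<noteq> {}"
  obtains K where "K \<subseteq> A" "card K \<le> 2"
    "\<And>B. K \<subseteq> B \<Longrightarrow> B \<subseteq> A \<Longrightarrow> sum F B = (sum F A :: 'a)"
    "card K = 1 \<or> sum F A \<in> range ((*) ghost_unit)"
proof -
  obtain k where k: "k \<in> A" "\<forall>j\<in>A. ghost_le (F j) (F k)"
    using ghost_le_exists_max[OF ST assms(2,3)] by blast
  show ?thesis
  proof (cases "\<forall>j\<in>A - {k}. ghost_unit * F j \<noteq> ghost_unit * F k")
    case True
    have "sum F B = F k" if "{k} \<subseteq> B" "B \<subseteq> A" for B
      using sum_eq_strict_max[OF ST, of B k F] that True k(2) assms(2) finite_subset by blast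
    then show ?thesis
      using that[of "{k}"] k(1) by auto
  next
    case False
    then obtain l where l: "l \<in> A" "l \<noteq> k" "ghost_unit * F l = ghost_unit * F k"
      by blast
    have "sum F B = ghost_unit * F k" if "{k, l} \<subseteq> B" "B \<subseteq> A" for B
      using sum_eq_ghost_of_tied_max[OF ST, of B k l F] that l k(2) assms(2) finite_subset
      by (metis (full_types) insert_subset subset_iff)
    then show ?thesis
      using that[of "{k, l}"] k(1) l by (auto simp: card_insert_if)
  qed
qed

definition basis_vec :: "'i \<Rightarrow> 'i \<Rightarrow> 'a::comm_semiring_1" where
  "basis_vec k = (\<lambda>i. if i = k then 1 else 0)"

definition restrict_vec :: "('i \<Rightarrow> 'a::comm_semiring_1) \<Rightarrow> 'i set \<Rightarrow> 'i \<Rightarrow> 'a" where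
  "restrict_vec x J = (\<lambda>i. if i \<in> J then x i else 0)"

lemma basis_vec_in_free_mod: "basis_vec k \<in> free_mod"
  unfolding free_mod_def basis_vec_def by simp

lemma vsmult_in_free_mod: "y \<in> free_mod \<Longrightarrow> vsmult c y \<in> free_mod"
  unfolding free_mod_def vsmult_def by (auto elim: finite_subset[rotated])

lemma restrict_vec_in_free_mod: "finite J \<Longrightarrow> restrict_vec x J \<in> free_mod"
  unfolding free_mod_def restrict_vec_def by (auto elim: finite_subset[rotated])

lemma restrict_vec_empty: "restrict_vec x {} = vzero"
  unfolding restrict_vec_def vzero_def by simp

lemma restrict_vec_supp: "restrict_vec x (supp x) = x"
  unfolding restrict_vec_def supp_def by auto

lemma restrict_vec_insert:
  "k \<notin> J \<Longrightarrow> restrict_vec x (insert k J) = vadd (restrict_vec x J) (vsmult (x k) (basis_vec k))"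
  unfolding restrict_vec_def vadd_def vsmult_def basis_vec_def by (rule ext) auto

lemma vzero_eq_vsmult_zero: "vzero = vsmult 0 vzero"
  unfolding vsmult_def vzero_def by simp

lemma vzero_in_free_mod: "vzero \<in> free_mod"
  unfolding free_mod_def vzero_def by simp

lemma sym_bilinear_commute:
  "sym_bilinear b \<Longrightarrow> x \<in> free_mod \<Longrightarrow> y \<in> free_mod \<Longrightarrow> b x y = b y x"
  unfolding sym_bilinear_def by blast

lemma sym_bilinear_vsmult:
  "sym_bilinear b \<Longrightarrow> x \<in> free_mod \<Longrightarrow> y \<in> free_mod \<Longrightarrow> b (vsmult a x) y = a * b x y"
  unfolding sym_bilinear_def by blast

lemma sym_bilinear_vadd:
  "sym_bilinear b \<Longrightarrow> x \<in> free_mod \<Longrightarrow> x' \<in> free_mod \<Longrightarrow> y \<in> free_mod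
    \<Longrightarrow> b (vadd x x') y = b x y + b x' y"
  unfolding sym_bilinear_def by blast

lemma sym_bilinear_vzero:
  "sym_bilinear b \<Longrightarrow> y \<in> free_mod \<Longrightarrow> b vzero y = 0"
  by (metis sym_bilinear_vsmult vzero_eq_vsmult_zero vzero_in_free_mod mult_zero_left)

lemma quadratic_form_vsmult:
  "quadratic_form q \<Longrightarrow> x \<in> free_mod \<Longrightarrow> q (vsmult a x) = a ^ 2 * q x"
  unfolding quadratic_form_def by blast

lemma quadratic_form_vzero: "quadratic_form q \<Longrightarrow> q vzero = 0"
  by (metis quadratic_form_vsmult vzero_eq_vsmult_zero vzero_in_free_mod mult_zero_left
      zero_power2)

lemma sym_bilinear_restrict_vec:
  assumes "sym_bilinear b" "y \<in> free_mod" "finite J"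
  shows "b (restrict_vec x J) y = (\<Sum>i\<in>J. x i * b (basis_vec i) y)"
  using assms(3)
proof (induction J rule: finite_induct)
  case empty
  then show ?case
    using sym_bilinear_vzero[OF assms(1,2)] by (simp add: restrict_vec_empty)
next
  case (insert k J)
  then show ?case
    using sym_bilinear_vadd[OF assms(1) restrict_vec_in_free_mod[OF insert(1)]
        vsmult_in_free_mod[OF basis_vec_in_free_mod] assms(2)]
      sym_bilinear_vsmult[OF assms(1) basis_vec_in_free_mod assms(2)]
    by (simp add: restrict_vec_insert add.commute)
qed

text \<open>The index set \<open>I\<close> carries no order, so the expansion
  \<open>q(\<Sum> x\<^sub>i \<epsilon>\<^sub>i) = \<Sum> x\<^sub>i\<^sup>2 q(\<epsilon>\<^sub>i) + \<Sum>\<^sub>i\<^sub><\<^sub>j x\<^sub>i x\<^sub>j b(\<epsilon>\<^sub>i,\<epsilon>\<^sub>j)\<close> is indexed by the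
  sets \<open>{i, j}\<close>, a singleton \<open>{i, i}\<close> standing for a diagonal term.\<close>

definition index_pairs :: "'i set \<Rightarrow> 'i set set" where
  "index_pairs J = {{i, j} | i j. i \<in> J \<and> j \<in> J}"

definition expansion_coeff ::
    "(('i \<Rightarrow> 'a::comm_semiring_1) \<Rightarrow> 'a) \<Rightarrow> (('i \<Rightarrow> 'a) \<Rightarrow> ('i \<Rightarrow> 'a) \<Rightarrow> 'a)
      \<Rightarrow> ('i \<Rightarrow> 'a) \<Rightarrow> 'i \<Rightarrow> 'i \<Rightarrow> 'a" where
  "expansion_coeff q b x i j =
     (if i = j then x i ^ 2 * q (basis_vec i) else x i * x j * b (basis_vec i) (basis_vec j))"

definition expansion_term ::
    "(('i \<Rightarrow> 'a::comm_semiring_1) \<Rightarrow> 'a) \<Rightarrow> (('i \<Rightarrow> 'a) \<Rightarrow> ('i \<Rightarrow> 'a) \<Rightarrow> 'a)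
      \<Rightarrow> ('i \<Rightarrow> 'a) \<Rightarrow> 'i set \<Rightarrow> 'a" where
  "expansion_term q b x P = (THE v. \<exists>i j. P = {i, j} \<and> v = expansion_coeff q b x i j)"

lemma expansion_term_doubleton:
  assumes "sym_bilinear b"
  shows "expansion_term q b x {i, j} = expansion_coeff q b x i j"
  unfolding expansion_term_def
proof (rule the_equality)
  fix v assume "\<exists>i' j'. {i, j} = {i', j'} \<and> v = expansion_coeff q b x i' j'"
  then obtain i' j' where "{i, j} = {i', j'}" "v = expansion_coeff q b x i' j'"
    by blast
  then show "v = expansion_coeff q b x i j"
    using sym_bilinear_commute[OF assms basis_vec_in_free_mod basis_vec_in_free_mod]
    unfolding expansion_coeff_def by (auto simp: doubleton_eq_iff ac_simps)
qed blast

lemma index_pairs_mono: "J \<subseteq> J' \<Longrightarrow> index_pairs J \<subseteq> index_pairs J'"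
  unfolding index_pairs_def by blast

lemma finite_index_pairs: "finite J \<Longrightarrow> finite (index_pairs J)"
  unfolding index_pairs_def by (rule finite_subset[of _ "Pow J"]) auto

lemma index_pairs_subset_iff: "P \<in> index_pairs J \<Longrightarrow> P \<subseteq> J' \<longleftrightarrow> P \<in> index_pairs J'"
  unfolding index_pairs_def by blast

lemma card_index_pair: "P \<in> index_pairs J \<Longrightarrow> card P \<le> 2"
  unfolding index_pairs_def by (auto simp: card_insert_if)

lemma index_pairs_insert:
  "index_pairs (insert k J) = index_pairs J \<union> (\<lambda>i. {i, k}) ` insert k J"
  unfolding index_pairs_def by blast

lemma quadratic_form_restrict_vec:
  assumes q: "quadratic_form q" and b: "sym_bilinear b"
    and qb: "\<forall>x\<in>free_mod. \<forall>y\<in>free_mod. q (vadd x y) = q x + q y + b x y"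
    and "finite J"
  shows "q (restrict_vec x J) = sum (expansion_term q b x) (index_pairs J)"
  using \<open>finite J\<close>
proof (induction J rule: finite_induct)
  case empty
  then show ?case
    by (simp add: restrict_vec_empty quadratic_form_vzero[OF q] index_pairs_def)
next
  case (insert k J)
  let ?T = "expansion_term q b x" and ?c = "expansion_coeff q b x"
  let ?y = "vsmult (x k) (basis_vec k)"
  have y: "?y \<in> free_mod"
    by (rule vsmult_in_free_mod[OF basis_vec_in_free_mod])
  have cross: "x i * b (basis_vec i) ?y = ?c i k" if "i \<in> J" for i
  proof -
    have "b (basis_vec i) ?y = b ?y (basis_vec i)"
      using sym_bilinear_commute[OF b basis_vec_in_free_mod y] .
    also have "\<dots> = x k * b (basis_vec k) (basis_vec i)"
      using sym_bilinear_vsmult[OF b basis_vec_in_free_mod basis_vec_in_free_mod] .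
    also have "b (basis_vec k) (basis_vec i) = b (basis_vec i) (basis_vec k)"
      using sym_bilinear_commute[OF b basis_vec_in_free_mod basis_vec_in_free_mod] .
    finally show ?thesis
      using that insert(2) unfolding expansion_coeff_def by (auto simp: ac_simps)
  qed
  have "q (restrict_vec x (insert k J)) = q (restrict_vec x J) + q ?y + b (restrict_vec x J) ?y"
    unfolding restrict_vec_insert[OF insert(2)]
    using qb restrict_vec_in_free_mod[OF insert(1)] y by blast
  also have "q ?y = ?c k k"
    using quadratic_form_vsmult[OF q basis_vec_in_free_mod] by (simp add: expansion_coeff_def)
  also have "b (restrict_vec x J) ?y = (\<Sum>i\<in>J. ?c i k)"
    using sym_bilinear_restrict_vec[OF b y insert(1)] cross by simp
  also have "q (restrict_vec x J) + ?c k k + (\<Sum>i\<in>J. ?c i k)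
      = q (restrict_vec x J) + (?c k k + (\<Sum>i\<in>J. ?c i k))"
    by (simp only: add.assoc)
  also have "?c k k + (\<Sum>i\<in>J. ?c i k) = sum ?T ((\<lambda>i. {i, k}) ` insert k J)"
  proof -
    have "inj_on (\<lambda>i. {i, k}) (insert k J)"
      by (auto simp: inj_on_def doubleton_eq_iff)
    then show ?thesis
      using insert(1,2) expansion_term_doubleton[OF b, of q x k k]
      by (simp add: sum.reindex expansion_term_doubleton[OF b])
  qed
  also have "q (restrict_vec x J) + sum ?T ((\<lambda>i. {i, k}) ` insert k J)
      = sum ?T (index_pairs (insert k J))"
  proof -
    have "k \<notin> P" if "P \<in> index_pairs J" for P
      using that insert(2) unfolding index_pairs_def by blast
    then have "index_pairs J \<inter> (\<lambda>i. {i, k}) ` insert k J = {}"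
      by blast
    then have "sum ?T (index_pairs (insert k J))
        = sum ?T (index_pairs J) + sum ?T ((\<lambda>i. {i, k}) ` insert k J)"
      unfolding index_pairs_insert
      by (intro sum.union_disjoint) (use insert(1) finite_index_pairs in auto)
    then show ?thesis
      using insert.IH by simp
  qed
  finally show ?case .
qed

lemma q_minimal_restrict_vec:
  assumes "q_minimal q x" "x \<in> free_mod" "finite J" "q (restrict_vec x J) = q x"
  shows "supp x \<subseteq> J"
proof -
  have "vadd (restrict_vec x J) (restrict_vec x (supp x - J)) = x"
    unfolding vadd_def restrict_vec_def supp_def by (rule ext) auto
  moreover have "finite (supp x - J)"
    using assms(2) unfolding free_mod_def supp_def by simp
  then have "restrict_vec x (supp x - J) \<in> free_mod"
    by (rule restrict_vec_in_free_mod)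
  ultimately have "min_le (restrict_vec x J) x"
    unfolding min_le_def by blast
  then have "restrict_vec x J i = x i" for i
    using assms restrict_vec_in_free_mod unfolding q_minimal_def by metis
  then show ?thesis
    unfolding supp_def restrict_vec_def by (smt (verit) mem_Collect_eq subsetI)
qed

lemma q_minimal_card_supp_le:
  assumes q: "quadratic_form q" and b: "sym_bilinear b"
    and qb: "\<forall>x\<in>free_mod. \<forall>y\<in>free_mod. q (vadd x y) = q x + q y + b x y"
    and x: "q_minimal q x" "x \<in> free_mod"
    and K: "K \<subseteq> index_pairs (supp x)"
      "\<And>B. K \<subseteq> B \<Longrightarrow> B \<subseteq> index_pairs (supp x)
         \<Longrightarrow> sum (expansion_term q b x) B = sum (expansion_term q b x) (index_pairs (supp x))"
  shows "card (supp x) \<le> 2 * card K"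
proof -
  let ?S = "supp x" and ?J = "\<Union>K"
  have fin_S: "finite ?S"
    using x(2) unfolding free_mod_def supp_def by simp
  have J_S: "?J \<subseteq> ?S"
    using K(1) index_pairs_subset_iff[of _ ?S ?S] by blast
  then have fin_J: "finite ?J"
    using fin_S finite_subset by blast
  have "q (restrict_vec x ?J) = sum (expansion_term q b x) (index_pairs ?J)"
    using quadratic_form_restrict_vec[OF q b qb fin_J] .
  also have "\<dots> = sum (expansion_term q b x) (index_pairs ?S)"
    using K index_pairs_subset_iff[of _ ?S ?J] index_pairs_mono[OF J_S] by (intro K(2)) blast+
  also have "\<dots> = q x"
    using quadratic_form_restrict_vec[OF q b qb fin_S, of x] by (simp add: restrict_vec_supp)
  finally have "?S \<subseteq> ?J"
    by (rule q_minimal_restrict_vec[OF x fin_J])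
  then have "card ?S \<le> card ?J"
    by (rule card_mono[OF fin_J])
  also have "\<dots> \<le> sum card K"
    by (rule card_Union_le_sum_card)
  also have "\<dots> \<le> 2 * card K"
    using sum_bounded_above[of K card 2] K(1) card_index_pair by (auto simp: mult.commute)
  finally show ?thesis .
qed

theorem proposition6p4:
  fixes q :: "('i \<Rightarrow> 'a::comm_semiring_1) \<Rightarrow> 'a"
    and x :: "'i \<Rightarrow> 'a"
  assumes "supertropical TYPE('a)"
    and "quadratic_form q"
    and "x \<in> free_mod"
    and "x \<noteq> vzero"
    and "q_minimal q x"
  shows "(q x \<in> tangibles \<longrightarrow> card (supp x) \<le> 2) \<and>
         (q x \<in> ghosts \<longrightarrow> card (supp x) \<le> 4)"
proof -
  obtain b where b: "sym_bilinear b"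
    and qb: "\<forall>x\<in>free_mod. \<forall>y\<in>free_mod. q (vadd x y) = q x + q y + b x y"
    using assms(2) unfolding quadratic_form_def by blast
  let ?P = "index_pairs (supp x)"
  have fin_S: "finite (supp x)"
    using assms(3) unfolding free_mod_def supp_def by simp
  have "?P \<noteq> {}"
    using assms(4) unfolding index_pairs_def supp_def vzero_def by fastforce
  then obtain K where K: "K \<subseteq> ?P" "card K \<le> 2"
      "\<And>B. K \<subseteq> B \<Longrightarrow> B \<subseteq> ?P \<Longrightarrow> sum (expansion_term q b x) B = sum (expansion_term q b x) ?P"
      "card K = 1 \<or> sum (expansion_term q b x) ?P \<in> range ((*) ghost_unit)"
    using supertropical_sum_dominant_terms[OF assms(1) finite_index_pairs[OF fin_S]] by metis
  have card_supp: "card (supp x) \<le> 2 * card K"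
    using q_minimal_card_supp_le[OF assms(2) b qb assms(5,3) K(1,3)] .
  have "q x = sum (expansion_term q b x) ?P"
    using quadratic_form_restrict_vec[OF assms(2) b qb fin_S, of x] by (simp add: restrict_vec_supp)
  then have "q x \<in> tangibles \<Longrightarrow> card K = 1"
    using K(4) unfolding tangibles_def by auto
  then show ?thesis
    using card_supp K(2) by auto
qed

end
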